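(* Let $A$ be a finite-dimensional commutative algebra over a field of characteristic zero which is associative or alternative, let $\mathrm{Rad}(A)$ be its (Jacobson) radical, and let $R$ be a Rota–Baxter operator of weight zero on $A$. Then (a) $\mathrm{Im}\,R\subseteq \mathrm{Rad}(A)$; (b) if $A$ is unital, then $\mathrm{rb}(A)\le 2m-1$, where $m$ is the nilpotency index of $\mathrm{Rad}(A)$ (the least $m$ with $\mathrm{Rad}(A)^m=0$).
   Context: A linear operator $R$ on $A$ is a Rota–Baxter operator of weight $0$ if $R(x)R(y)=R(R(x)y+xR(y))$ for all $x,y\in A$. For finite-dimensional associative or alternative $A$, $\mathrm{Rad}(A)$ is the largest nilpotent ideal. The RB-index $\mathrm{rb}(A)$ is the least $n\in\mathbb N$ such that $R^n=0$ for every Rota–Baxter operator $R$ of weight zero on $A$ ($\infty$ if no such $n$ exists). *)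

theory Defs
  imports Main "HOL-Library.Extended_Nat"
begin

definition bilinear_mult :: "('k::field \<Rightarrow> 'v::ab_group_add \<Rightarrow> 'v) \<Rightarrow> ('v \<Rightarrow> 'v \<Rightarrow> 'v) \<Rightarrow> bool" where
  "bilinear_mult scale mult \<longleftrightarrow>
     (\<forall>x y z. mult (x + y) z = mult x z + mult y z) \<and>
     (\<forall>x y z. mult x (y + z) = mult x y + mult x z) \<and>
     (\<forall>a x y. mult (scale a x) y = scale a (mult x y)) \<and>
     (\<forall>a x y. mult x (scale a y) = scale a (mult x y))"

definition algebra :: "('k::field \<Rightarrow> 'v::ab_group_add \<Rightarrow> 'v) \<Rightarrow> ('v \<Rightarrow> 'v \<Rightarrow> 'v) \<Rightarrow> bool" where
  "algebra scale mult \<longleftrightarrow> vector_space scale \<and> bilinear_mult scale mult"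

definition finite_dim_algebra :: "('k::field \<Rightarrow> 'v::ab_group_add \<Rightarrow> 'v) \<Rightarrow> ('v \<Rightarrow> 'v \<Rightarrow> 'v) \<Rightarrow> bool" where
  "finite_dim_algebra scale mult \<longleftrightarrow>
     algebra scale mult \<and> (\<exists>B. finite B \<and> module.span scale B = UNIV)"

definition commutative_mult :: "('v \<Rightarrow> 'v \<Rightarrow> 'v) \<Rightarrow> bool" where
  "commutative_mult mult \<longleftrightarrow> (\<forall>x y. mult x y = mult y x)"

definition associative_mult :: "('v \<Rightarrow> 'v \<Rightarrow> 'v) \<Rightarrow> bool" where
  "associative_mult mult \<longleftrightarrow> (\<forall>x y z. mult (mult x y) z = mult x (mult y z))"

definition alternative_mult :: "('v \<Rightarrow> 'v \<Rightarrow> 'v) \<Rightarrow> bool" where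
  "alternative_mult mult \<longleftrightarrow>
     (\<forall>x y. mult (mult x x) y = mult x (mult x y)) \<and>
     (\<forall>x y. mult (mult y x) x = mult y (mult x x))"

definition unital_mult :: "('v \<Rightarrow> 'v \<Rightarrow> 'v) \<Rightarrow> bool" where
  "unital_mult mult \<longleftrightarrow> (\<exists>e. \<forall>x. mult e x = x \<and> mult x e = x)"

definition alg_ideal :: "('k::field \<Rightarrow> 'v::ab_group_add \<Rightarrow> 'v) \<Rightarrow> ('v \<Rightarrow> 'v \<Rightarrow> 'v) \<Rightarrow> 'v set \<Rightarrow> bool" where
  "alg_ideal scale mult I \<longleftrightarrow>
     module.subspace scale I \<and> (\<forall>x\<in>I. \<forall>a. mult a x \<in> I \<and> mult x a \<in> I)"

text \<open>prods mult I n x: x is a product of exactly n (n \<ge> 1) elements of I,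
  in some bracketing.\<close>
inductive prods :: "('v \<Rightarrow> 'v \<Rightarrow> 'v) \<Rightarrow> 'v set \<Rightarrow> nat \<Rightarrow> 'v \<Rightarrow> bool"
  for mult :: "'v \<Rightarrow> 'v \<Rightarrow> 'v" and I :: "'v set" where
  base: "x \<in> I \<Longrightarrow> prods mult I 1 x"
| step: "prods mult I i x \<Longrightarrow> prods mult I j y \<Longrightarrow> prods mult I (i + j) (mult x y)"

text \<open>The power I^n (n \<ge> 1): linear span of all products of n elements of I
  (equivalently I^1 = I, I^n = sum over i+j=n of I^i I^j).\<close>
definition ideal_pow :: "('k::field \<Rightarrow> 'v::ab_group_add \<Rightarrow> 'v) \<Rightarrow> ('v \<Rightarrow> 'v \<Rightarrow> 'v) \<Rightarrow> 'v set \<Rightarrow> nat \<Rightarrow> 'v set" where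
  "ideal_pow scale mult I n = module.span scale {x. prods mult I n x}"

definition nilpotent_ideal :: "('k::field \<Rightarrow> 'v::ab_group_add \<Rightarrow> 'v) \<Rightarrow> ('v \<Rightarrow> 'v \<Rightarrow> 'v) \<Rightarrow> 'v set \<Rightarrow> bool" where
  "nilpotent_ideal scale mult I \<longleftrightarrow>
     alg_ideal scale mult I \<and> (\<exists>n\<ge>1. ideal_pow scale mult I n = {0})"

definition Rad :: "('k::field \<Rightarrow> 'v::ab_group_add \<Rightarrow> 'v) \<Rightarrow> ('v \<Rightarrow> 'v \<Rightarrow> 'v) \<Rightarrow> 'v set" where
  "Rad scale mult = (GREATEST I. nilpotent_ideal scale mult I)"

definition nil_index :: "('k::field \<Rightarrow> 'v::ab_group_add \<Rightarrow> 'v) \<Rightarrow> ('v \<Rightarrow> 'v \<Rightarrow> 'v) \<Rightarrow> 'v set \<Rightarrow> nat" where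
  "nil_index scale mult I = (LEAST m. 1 \<le> m \<and> ideal_pow scale mult I m = {0})"

definition rota_baxter0 :: "('k::field \<Rightarrow> 'v::ab_group_add \<Rightarrow> 'v) \<Rightarrow> ('v \<Rightarrow> 'v \<Rightarrow> 'v) \<Rightarrow> ('v \<Rightarrow> 'v) \<Rightarrow> bool" where
  "rota_baxter0 scale mult R \<longleftrightarrow>
     Vector_Spaces.linear scale scale R \<and>
     (\<forall>x y. mult (R x) (R y) = R (mult (R x) y + mult x (R y)))"

definition rb_index :: "('k::field \<Rightarrow> 'v::ab_group_add \<Rightarrow> 'v) \<Rightarrow> ('v \<Rightarrow> 'v \<Rightarrow> 'v) \<Rightarrow> enat" where
  "rb_index scale mult =
     (if \<exists>n. \<forall>R. rota_baxter0 scale mult R \<longrightarrow> (R ^^ n) = (\<lambda>_. 0)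
      then enat (LEAST n. \<forall>R. rota_baxter0 scale mult R \<longrightarrow> (R ^^ n) = (\<lambda>_. 0))
      else \<infinity>)"

end

(*
  Every element of Im R is nilpotent. Indeed Im R is a subalgebra, and by Fitting's lemma a
  non-nilpotent element of a finite-dimensional commutative subalgebra M yields a nonzero
  idempotent of M; but the Rota-Baxter identity forces every idempotent R y to vanish.
  A nilpotent element generates a nilpotent ideal, so it lies in the radical, which exists
  because sums of nilpotent ideals are nilpotent.

  If A has a unit 1, put a = R 1, an element of Rad A. The Rota-Baxter identity with one argument
  equal to 1 gives n R^(n+1) x = a R^n x - R^n (a x), and induction on n shows that
  a^i R^n a^j vanishes once i + j + n >= 2m - 1; in particular R^(2m-1) = 0.

  A commutative alternative algebra over a field of characteristic 0 is associative, so only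
  the associative case needs work.
*)

theory Submission
  imports Defs "HOL-Library.Set_Algebras"
begin

section \<open>Linear algebra\<close>

lemma (in vector_space) scale_two: "scale 2 x = x + x"
  by (simp add: scale_left_distrib[of 1 1, simplified])

lemma (in vector_space) scale_three: "scale 3 x = x + x + x"
  by (simp add: scale_left_distrib[of 2 1, simplified] scale_two)

lemma (in vector_space) linear_funpow:
  "Vector_Spaces.linear scale scale f \<Longrightarrow> Vector_Spaces.linear scale scale (f ^^ n)"
  by (induction n) (simp_all add: linear_id Vector_Spaces.linear_compose)

context finite_dimensional_vector_space
begin

lemma linear_inj_on_if_image_eq:
  assumes f: "Vector_Spaces.linear scale scale f" and W: "f ` W = W"
  shows "inj_on f W"
proof -
  interpret f: Vector_Spaces.linear scale scale f by fact
  obtain B where B: "B \<subseteq> W" "independent B" "W \<subseteq> span B" "card B = dim W"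
    by (rule basis_exists)
  have "finite B"
    using B(2) by (rule finiteI_independent)
  have "W \<subseteq> span (f ` B)"
    using B(3) W f.span_image by blast
  moreover have "f ` B \<subseteq> W"
    using B(1) W by blast
  ultimately have "dim W \<le> card (f ` B)"
    using \<open>finite B\<close> span_card_ge_dim by blast
  then have card: "card (f ` B) = card B"
    using card_image_le[OF \<open>finite B\<close>, of f] B(4) by linarith
  then have "inj_on f B"
    using \<open>finite B\<close> by (simp add: eq_card_imp_inj_on)
  moreover have "independent (f ` B)"
    using card_eq_dim[OF \<open>f ` B \<subseteq> W\<close>] card B(4) \<open>finite B\<close> \<open>W \<subseteq> span (f ` B)\<close> by simp
  ultimately have "inj_on f (span B)"
    by (rule f.inj_on_span_independent_image[rotated])
  then show ?thesis
    using B(3) by (rule inj_on_subset)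
qed

text \<open>Fitting: the images \<open>f\<^sup>n M\<close> of an invariant subspace decrease, so the one of least
  dimension is mapped onto itself.\<close>

lemma linear_funpow_image_stable:
  assumes f: "Vector_Spaces.linear scale scale f" and M: "subspace M" "f ` M \<subseteq> M"
  obtains n where "f ` ((f ^^ n) ` M) = (f ^^ n) ` M"
proof -
  obtain n where n: "\<forall>k. dim ((f ^^ n) ` M) \<le> dim ((f ^^ k) ` M)"
    using ex_has_least_nat[of "\<lambda>_. True" 0 "\<lambda>k. dim ((f ^^ k) ` M)"] by blast
  have shift: "f ` ((f ^^ n) ` M) = (f ^^ n) ` (f ` M)"
    by (simp add: image_comp funpow_swap1 comp_def)
  have subspaces: "subspace ((f ^^ k) ` M)" for k
  proof -
    interpret Vector_Spaces.linear scale scale "f ^^ k"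
      using f by (rule linear_funpow)
    show ?thesis
      using M(1) by (rule subspace_image)
  qed
  have "f ` ((f ^^ n) ` M) = (f ^^ n) ` M"
  proof (rule subspace_dim_equal)
    show "subspace (f ` ((f ^^ n) ` M))"
      by (simp add: image_comp subspaces flip: funpow.simps(2) o_def)
    show "f ` ((f ^^ n) ` M) \<subseteq> (f ^^ n) ` M"
      unfolding shift using M(2) by blast
    show "dim ((f ^^ n) ` M) \<le> dim (f ` ((f ^^ n) ` M))"
      using n by (simp add: image_comp flip: funpow.simps(2) o_def)
  qed (rule subspaces)
  then show ?thesis
    by (rule that)
qed

end

section \<open>Bilinear algebras and products of ideals\<close>

locale bilinear_algebra = vector_space scale
  for scale :: "'k::field \<Rightarrow> 'v::ab_group_add \<Rightarrow> 'v" +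
  fixes mult :: "'v \<Rightarrow> 'v \<Rightarrow> 'v"
  assumes mult_add_left: "mult (x + y) z = mult x z + mult y z"
    and mult_add_right: "mult x (y + z) = mult x y + mult x z"
    and mult_scale_left: "mult (scale a x) y = scale a (mult x y)"
    and mult_scale_right: "mult x (scale a y) = scale a (mult x y)"
begin

lemma mult_zero_left [simp]: "mult 0 x = 0"
  using mult_add_left[of 0 0 x] by simp

lemma mult_zero_right [simp]: "mult x 0 = 0"
  using mult_add_right[of x 0 0] by simp

lemma mult_diff_right: "mult x (y - z) = mult x y - mult x z"
  by (simp add: eq_diff_eq flip: mult_add_right)

end

text \<open>Linearizing the left alternative law of a commutative algebra gives
  \<open>2 (xz)y = (zy)x + (xy)z\<close>; the sum of its three cyclic instances says \<open>3 (xy)z = 3 (yz)x\<close>,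
  and 3 is invertible in characteristic 0.\<close>

lemma associative_if_commutative_alternative:
  fixes scale :: "'k::field_char_0 \<Rightarrow> 'v::ab_group_add \<Rightarrow> 'v"
  assumes "bilinear_algebra scale mult"
    and comm: "commutative_mult mult" and alt: "alternative_mult mult"
  shows "associative_mult mult"
proof -
  interpret bilinear_algebra scale mult by fact
  have comm': "mult x y = mult y x" for x y
    using comm unfolding commutative_mult_def by blast
  have left_alt: "mult (mult x x) y = mult x (mult x y)" for x y
    using alt unfolding alternative_mult_def by blast
  have linearized: "mult (mult x z) y + mult (mult z x) y = mult x (mult z y) + mult z (mult x y)"
    for x y z
    using left_alt[of "x + z" y]
    by (simp add: mult_add_left mult_add_right left_alt algebra_simps)
  have cyclic: "mult (mult x z) y + mult (mult x z) y = mult (mult y z) x + mult (mult x y) z"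
    for x y z
    using linearized[of x z y] by (simp add: comm')
  show ?thesis
    unfolding associative_mult_def
  proof (intro allI)
    fix x y z
    have "scale 3 (mult (mult x y) z) = scale 3 (mult (mult y z) x)"
      unfolding scale_three
      using cyclic[of x y z] cyclic[of y z x] cyclic[of z x y]
      by (simp add: comm' algebra_simps)
    then show "mult (mult x y) z = mult x (mult y z)"
      by (simp add: comm')
  qed
qed

context bilinear_algebra
begin

lemma mult_mem_span:
  assumes "x \<in> span S" "y \<in> span T" "\<And>s t. s \<in> S \<Longrightarrow> t \<in> T \<Longrightarrow> mult s t \<in> span U"
  shows "mult x y \<in> span U"
proof -
  have "mult s y \<in> span U" if "s \<in> S" for s
    using assms(2)
    by (induction rule: span_induct_alt)
      (simp_all add: span_zero mult_add_right mult_scale_right span_add span_scale assms(3) that)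
  with assms(1) show ?thesis
    by (induction rule: span_induct_alt)
      (simp_all add: span_zero mult_add_left mult_scale_left span_add span_scale)
qed

lemma prods_ge_1: "prods mult I n x \<Longrightarrow> 1 \<le> n"
  by (induction rule: prods.induct) auto

lemma prods_mem_ideal: "prods mult I n x \<Longrightarrow> alg_ideal scale mult I \<Longrightarrow> x \<in> I"
  by (induction rule: prods.induct) (auto simp: alg_ideal_def)

lemma prods_funpow_mult:
  assumes "a \<in> I" "v \<in> I"
  shows "prods mult I (Suc i) ((mult a ^^ i) v)"
proof (induction i)
  case 0
  then show ?case
    using prods.base[OF assms(2)] by simp
next
  case (Suc i)
  then show ?case
    using prods.step[OF prods.base[OF assms(1)]] by simp
qed

text \<open>Inside an ideal, a product of \<open>n\<close> factors is also one of any \<open>k \<le> n\<close> factors: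
  merge factors into their products.\<close>

lemma prods_fewer_factors:
  assumes "prods mult I n x" "alg_ideal scale mult I" "1 \<le> k" "k \<le> n"
  shows "prods mult I k x"
  using assms
proof (induction arbitrary: k rule: prods.induct)
  case (base x)
  then show ?case
    using prods.base[of x I mult] by simp
next
  case (step i x j y)
  show ?case
  proof (cases "k = 1")
    case True
    then show ?thesis
      using prods_mem_ideal[OF prods.step[OF step.hyps]] step.prems(1) prods.base by metis
  next
    case False
    define k1 where "k1 = min i (k - 1)"
    have "1 \<le> i" "1 \<le> j"
      using step.hyps prods_ge_1 by auto
    then have "prods mult I k1 x" "prods mult I (k - k1) y"
      using False step.prems step.IH unfolding k1_def by auto
    then show ?thesis
      using prods.step step.prems(3) unfolding k1_def by fastforce
  qed
qed

lemma ideal_pow_eq_zero_iff: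
  "ideal_pow scale mult I n = {0} \<longleftrightarrow> (\<forall>x. prods mult I n x \<longrightarrow> x = 0)"
proof
  assume "ideal_pow scale mult I n = {0}"
  then show "\<forall>x. prods mult I n x \<longrightarrow> x = 0"
    unfolding ideal_pow_def using span_base by blast
next
  assume "\<forall>x. prods mult I n x \<longrightarrow> x = 0"
  then have "span {x. prods mult I n x} \<subseteq> span {0}"
    by (intro span_mono) auto
  then show "ideal_pow scale mult I n = {0}"
    unfolding ideal_pow_def using span_zero by auto
qed

lemma prods_eq_zero_if_ideal_pow_eq_zero:
  assumes "alg_ideal scale mult I" "ideal_pow scale mult I m = {0}" "1 \<le> m"
    and "prods mult I n x" "m \<le> n"
  shows "x = 0"
  using assms prods_fewer_factors ideal_pow_eq_zero_iff by blast

lemma alg_ideal_sum: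
  assumes "alg_ideal scale mult I" "alg_ideal scale mult J"
  shows "alg_ideal scale mult (I + J)"
  unfolding alg_ideal_def
proof (intro conjI ballI allI)
  have "I + J = {x + y |x y. x \<in> I \<and> y \<in> J}"
    by (auto simp: set_plus_def)
  then show "subspace (I + J)"
    using assms subspace_sums by (simp add: alg_ideal_def)
next
  fix x a
  assume "x \<in> I + J"
  then obtain u v where "x = u + v" "u \<in> I" "v \<in> J"
    by (auto elim: set_plus_elim)
  with assms show "mult a x \<in> I + J" "mult x a \<in> I + J"
    by (auto simp: alg_ideal_def mult_add_left mult_add_right)
qed

lemma alg_ideal_zero: "alg_ideal scale mult I \<Longrightarrow> 0 \<in> I"
  by (simp add: alg_ideal_def subspace_0)

end

locale comm_assoc_algebra = bilinear_algebra scale mult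
  for scale :: "'k::field \<Rightarrow> 'v::ab_group_add \<Rightarrow> 'v" and mult +
  assumes mult_commute: "mult x y = mult y x"
    and mult_assoc: "mult (mult x y) z = mult x (mult y z)"
begin

lemma mult_left_commute: "mult x (mult y z) = mult y (mult x z)"
  by (metis mult_assoc mult_commute)

lemma funpow_mult_scale: "(mult r ^^ k) (scale c x) = scale c ((mult r ^^ k) x)"
  by (induction k) (simp_all add: mult_scale_right)

lemma funpow_mult_diff: "(mult r ^^ k) (x - y) = (mult r ^^ k) x - (mult r ^^ k) y"
  by (induction k) (simp_all add: mult_diff_right)

lemma funpow_mult_zero [simp]: "(mult r ^^ k) 0 = 0"
  by (induction k) simp_all

lemma mult_funpow_mult_left: "mult ((mult r ^^ k) x) y = (mult r ^^ k) (mult x y)"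
  by (induction k) (simp_all add: mult_assoc)

lemma funpow_mult_Suc: "(mult r ^^ Suc k) x = (mult r ^^ k) (mult r x)"
  by (simp only: funpow_Suc_right o_apply)

lemma linear_mult_left: "Vector_Spaces.linear scale scale (mult r)"
  by (simp add: Vector_Spaces.linear_iff vector_space_axioms mult_add_right mult_scale_right)

text \<open>\<open>(mult r ^^ k) r\<close> is the power \<open>r\<^sup>k\<^sup>+\<^sup>1\<close>.\<close>

lemma mult_powers: "mult ((mult r ^^ a) r) ((mult r ^^ b) r) = (mult r ^^ (a + b + 1)) r"
proof -
  have "mult ((mult r ^^ a) r) ((mult r ^^ b) r) = (mult r ^^ a) ((mult r ^^ Suc b) r)"
    by (simp add: mult_funpow_mult_left)
  also have "\<dots> = (mult r ^^ (a + b + 1)) r"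
    by (metis Suc_eq_plus1 add.assoc funpow_add o_apply)
  finally show ?thesis .
qed

definition principal_ideal :: "'v \<Rightarrow> 'v set" where
  "principal_ideal r = {scale c r + mult b r |c b. True}"

lemma mem_principal_ideal: "r \<in> principal_ideal r"
  unfolding principal_ideal_def by (rule CollectI, rule exI[of _ 1], rule exI[of _ 0]) simp

lemma mult_mem_principal_ideal: "mult b r \<in> principal_ideal r"
  unfolding principal_ideal_def by (rule CollectI, rule exI[of _ 0], rule exI[of _ b]) simp

lemma principal_ideal_zero [simp]: "principal_ideal 0 = {0}"
  unfolding principal_ideal_def by auto

lemma alg_ideal_principal_ideal: "alg_ideal scale mult (principal_ideal r)"
  unfolding alg_ideal_def subspace_def
proof (intro conjI ballI allI)
  show "0 \<in> principal_ideal r"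
    using mult_mem_principal_ideal[of 0 r] by simp
next
  fix x y
  assume "x \<in> principal_ideal r" "y \<in> principal_ideal r"
  then obtain c b c' b' where "x = scale c r + mult b r" "y = scale c' r + mult b' r"
    unfolding principal_ideal_def by blast
  then have "x + y = scale (c + c') r + mult (b + b') r"
    by (simp add: mult_add_left algebra_simps)
  then show "x + y \<in> principal_ideal r"
    unfolding principal_ideal_def by blast
next
  fix d x
  assume "x \<in> principal_ideal r"
  then obtain c b where "x = scale c r + mult b r"
    unfolding principal_ideal_def by blast
  then have "scale d x = scale (d * c) r + mult (scale d b) r"
    by (simp add: mult_scale_left scale_right_distrib)
  then show "scale d x \<in> principal_ideal r"
    unfolding principal_ideal_def by blast
next
  fix x a
  assume "x \<in> principal_ideal r"
  then obtain c b where "x = scale c r + mult b r"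
    unfolding principal_ideal_def by blast
  then have "mult a x = mult (scale c a + mult a b) r"
    by (simp add: mult_add_left mult_add_right mult_scale_left mult_scale_right mult_assoc)
  then show "mult a x \<in> principal_ideal r" "mult x a \<in> principal_ideal r"
    by (simp_all add: mult_mem_principal_ideal mult_commute[of x a])
qed

lemma mult_mem_principal_ideal_mult:
  assumes "x \<in> principal_ideal r" "y \<in> principal_ideal s"
  shows "mult x y \<in> principal_ideal (mult r s)"
proof -
  obtain c b c' b' where "x = scale c r + mult b r" "y = scale c' s + mult b' s"
    using assms unfolding principal_ideal_def by blast
  then have "mult x y = scale (c * c') (mult r s) + mult (scale c b' + scale c' b + mult b b') (mult r s)"
    by (simp add: mult_add_left mult_add_right mult_scale_left mult_scale_right algebra_simps
        mult_left_commute mult_assoc)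
  then show ?thesis
    unfolding principal_ideal_def by blast
qed

lemma prods_principal_ideal:
  "prods mult (principal_ideal r) n u \<Longrightarrow> u \<in> principal_ideal ((mult r ^^ (n - 1)) r)"
proof (induction rule: prods.induct)
  case (base u)
  then show ?case
    by simp
next
  case (step i x j y)
  have "i - 1 + (j - 1) + 1 = i + j - 1"
    using prods_ge_1[OF step.hyps(1)] prods_ge_1[OF step.hyps(2)] by simp
  with mult_mem_principal_ideal_mult[OF step.IH] show ?case
    by (simp only: mult_powers)
qed

lemma nilpotent_principal_ideal:
  assumes "(mult r ^^ k) r = 0"
  shows "nilpotent_ideal scale mult (principal_ideal r)"
proof -
  have "u = 0" if "prods mult (principal_ideal r) (k + 1) u" for u
    using prods_principal_ideal[OF that] assms by simp
  then have "ideal_pow scale mult (principal_ideal r) (k + 1) = {0}"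
    by (simp add: ideal_pow_eq_zero_iff)
  then show ?thesis
    unfolding nilpotent_ideal_def using alg_ideal_principal_ideal by auto
qed

text \<open>\<open>x\<close> lies in the ideal generated by a product of \<open>p\<close> elements of \<open>I\<close>; the empty product
  counts as dividing everything.\<close>

definition prods_dvd :: "'v set \<Rightarrow> nat \<Rightarrow> 'v \<Rightarrow> bool" where
  "prods_dvd I p x \<longleftrightarrow> p = 0 \<or> (\<exists>y. prods mult I p y \<and> x \<in> principal_ideal y)"

lemma prods_dvd_mult:
  assumes "prods_dvd I p x" "prods_dvd I q y"
  shows "prods_dvd I (p + q) (mult x y)"
proof (cases "p = 0 \<or> q = 0")
  case True
  have "x \<in> principal_ideal x' \<Longrightarrow> mult x y \<in> principal_ideal x'"
    "y \<in> principal_ideal y' \<Longrightarrow> mult x y \<in> principal_ideal y'" for x' y'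
    using alg_ideal_principal_ideal unfolding alg_ideal_def by blast+
  with True assms show ?thesis
    unfolding prods_dvd_def by auto
next
  case False
  with assms obtain x' y' where "prods mult I p x'" "x \<in> principal_ideal x'"
    "prods mult I q y'" "y \<in> principal_ideal y'"
    unfolding prods_dvd_def by blast
  then show ?thesis
    unfolding prods_dvd_def by (blast intro: prods.step mult_mem_principal_ideal_mult)
qed

lemma prods_dvd_eq_zero:
  assumes "prods_dvd I p x" "alg_ideal scale mult I"
    and "ideal_pow scale mult I m = {0}" "1 \<le> m" "m \<le> p"
  shows "x = 0"
proof -
  obtain y where "prods mult I p y" "x \<in> principal_ideal y"
    using assms(1,4,5) unfolding prods_dvd_def by auto
  moreover have "y = 0"
    using prods_eq_zero_if_ideal_pow_eq_zero assms(2-5) calculation(1) by blast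
  ultimately show ?thesis
    by simp
qed

text \<open>Expanding a product of \<open>n\<close> elements of \<open>I + J\<close> by bilinearity gives a sum of products
  with \<open>p\<close> factors from \<open>I\<close> and \<open>q\<close> from \<open>J\<close>, \<open>p + q = n\<close>.\<close>

lemma prods_sum_mem_span:
  assumes "prods mult (I + J) n u"
  shows "u \<in> span {x. \<exists>p q. p + q = n \<and> prods_dvd I p x \<and> prods_dvd J q x}"
  using assms
proof (induction rule: prods.induct)
  case (base u)
  then obtain a b where u: "u = a + b" "a \<in> I" "b \<in> J"
    by (auto elim: set_plus_elim)
  then have "prods_dvd I 1 a \<and> prods_dvd J 0 a" "prods_dvd I 0 b \<and> prods_dvd J 1 b"
    unfolding prods_dvd_def using prods.base[OF u(2)] prods.base[OF u(3)] mem_principal_ideal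
    by blast+
  then have "a \<in> span {x. \<exists>p q. p + q = 1 \<and> prods_dvd I p x \<and> prods_dvd J q x}"
    "b \<in> span {x. \<exists>p q. p + q = 1 \<and> prods_dvd I p x \<and> prods_dvd J q x}"
    by (metis (mono_tags, lifting) add_0 add.right_neutral mem_Collect_eq span_base)+
  then show ?case
    unfolding u by (rule span_add)
next
  case (step i x j y)
  show ?case
  proof (rule mult_mem_span[OF step.IH])
    fix s t
    assume "s \<in> {x. \<exists>p q. p + q = i \<and> prods_dvd I p x \<and> prods_dvd J q x}"
      and "t \<in> {x. \<exists>p q. p + q = j \<and> prods_dvd I p x \<and> prods_dvd J q x}"
    then obtain p q p' q' where "p + q = i" "prods_dvd I p s" "prods_dvd J q s"
      "p' + q' = j" "prods_dvd I p' t" "prods_dvd J q' t"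
      by blast
    then have "(p + p') + (q + q') = i + j"
      "prods_dvd I (p + p') (mult s t)" "prods_dvd J (q + q') (mult s t)"
      by (simp_all add: prods_dvd_mult)
    then show "mult s t \<in> span {x. \<exists>p q. p + q = i + j \<and> prods_dvd I p x \<and> prods_dvd J q x}"
      by (intro span_base) blast
  qed
qed

lemma nilpotent_ideal_sum:
  assumes "nilpotent_ideal scale mult I" "nilpotent_ideal scale mult J"
  shows "nilpotent_ideal scale mult (I + J)"
proof -
  obtain P Q where I: "alg_ideal scale mult I" "ideal_pow scale mult I P = {0}" "1 \<le> P"
    and J: "alg_ideal scale mult J" "ideal_pow scale mult J Q = {0}" "1 \<le> Q"
    using assms unfolding nilpotent_ideal_def by blast
  have "x = 0" if "p + q = P + Q - 1" "prods_dvd I p x" "prods_dvd J q x" for p q x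
  proof -
    have "P \<le> p \<or> Q \<le> q"
      using that(1) by linarith
    then show "x = 0"
      using prods_dvd_eq_zero[OF that(2) I] prods_dvd_eq_zero[OF that(3) J] by blast
  qed
  then have "span {x. \<exists>p q. p + q = P + Q - 1 \<and> prods_dvd I p x \<and> prods_dvd J q x} \<subseteq> span {0}"
    by (intro span_mono) blast
  then have "u = 0" if "prods mult (I + J) (P + Q - 1) u" for u
    using prods_sum_mem_span[OF that] by auto
  then have "ideal_pow scale mult (I + J) (P + Q - 1) = {0}"
    by (simp add: ideal_pow_eq_zero_iff)
  moreover have "1 \<le> P + Q - 1"
    using I(3) J(3) by simp
  ultimately show ?thesis
    unfolding nilpotent_ideal_def using alg_ideal_sum[OF I(1) J(1)] by blast
qed

end

section \<open>The radical of a finite-dimensional commutative algebra\<close>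

locale fd_comm_assoc_algebra = comm_assoc_algebra scale mult +
  finite_dimensional_vector_space scale Basis
  for scale :: "'k::field \<Rightarrow> 'v::ab_group_add \<Rightarrow> 'v" and mult and Basis
begin

text \<open>Multiplication by \<open>r\<close> is bijective on \<open>W = r\<^sup>n M\<close> for large \<open>n\<close>, hence so is multiplication by
  \<open>s = r\<^sup>n\<^sup>+\<^sup>1\<close>; the solution \<open>e \<in> W\<close> of \<open>s e = s\<close> is then idempotent.\<close>

lemma idempotent_if_not_nilpotent:
  assumes M: "subspace M" "\<And>x y. x \<in> M \<Longrightarrow> y \<in> M \<Longrightarrow> mult x y \<in> M" "r \<in> M"
    and not_nilpotent: "\<And>k. (mult r ^^ k) r \<noteq> 0"
  obtains e where "e \<in> M" "e \<noteq> 0" "mult e e = e"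
proof -
  obtain n where n: "mult r ` ((mult r ^^ n) ` M) = (mult r ^^ n) ` M"
    using linear_funpow_image_stable[OF linear_mult_left M(1)] M(2,3) by blast
  define W where "W = (mult r ^^ n) ` M"
  define s where "s = (mult r ^^ n) r"
  have "bij_betw (mult r) W W"
    using n linear_inj_on_if_image_eq[OF linear_mult_left] unfolding W_def bij_betw_def by blast
  moreover have "mult s = mult r ^^ Suc n"
    by (rule ext) (simp only: s_def mult_funpow_mult_left funpow_mult_Suc)
  ultimately have bij: "bij_betw (mult s) W W"
    using bij_betw_funpow by metis
  have "s \<in> W"
    unfolding s_def W_def using M(3) by blast
  then obtain e where e: "e \<in> W" "mult s e = s"
    using bij by (metis bij_betw_iff_bijections)
  have "W \<subseteq> M"
    unfolding W_def using M by (induction n) auto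
  have W_mult: "mult x y \<in> W" if "x \<in> W" "y \<in> W" for x y
  proof -
    obtain m where "m \<in> M" "x = (mult r ^^ n) m"
      using \<open>x \<in> W\<close> unfolding W_def by blast
    with \<open>W \<subseteq> M\<close> show ?thesis
      using that(2) M(2) unfolding W_def by (auto simp: mult_funpow_mult_left)
  qed
  have "mult s (mult e e) = mult s e"
    using e(2) by (simp flip: mult_assoc)
  then have "mult e e = e"
    using bij e(1) W_mult[OF e(1) e(1)] unfolding bij_betw_def inj_on_def by blast
  moreover have "e \<noteq> 0"
    using e(2) not_nilpotent[of n] unfolding s_def by auto
  moreover have "e \<in> M"
    using e(1) \<open>W \<subseteq> M\<close> by blast
  ultimately show ?thesis
    using that by blast
qed

lemma nilpotent_ideal_zero: "nilpotent_ideal scale mult {0}"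
proof -
  have ideal: "alg_ideal scale mult {0}"
    unfolding alg_ideal_def by simp
  then have "ideal_pow scale mult {0} 1 = {0}"
    using prods_mem_ideal by (auto simp: ideal_pow_eq_zero_iff)
  with ideal show ?thesis
    unfolding nilpotent_ideal_def by blast
qed

text \<open>A nilpotent ideal of maximal dimension contains every nilpotent ideal \<open>J\<close>,
  since \<open>I + J\<close> is again nilpotent.\<close>

lemma ex_greatest_nilpotent_ideal:
  "\<exists>I. nilpotent_ideal scale mult I \<and> (\<forall>J. nilpotent_ideal scale mult J \<longrightarrow> J \<subseteq> I)"
proof -
  define D where "D = dim ` {I. nilpotent_ideal scale mult I}"
  have "finite D"
    unfolding D_def by (rule finite_subset[of _ "{..dimension}"]) (auto simp: dim_subset_UNIV)
  moreover have "D \<noteq> {}"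
    unfolding D_def using nilpotent_ideal_zero by blast
  ultimately have "Max D \<in> D"
    by (rule Max_in)
  then obtain I where I: "nilpotent_ideal scale mult I" "dim I = Max D"
    unfolding D_def by (metis imageE mem_Collect_eq)
  have "J \<subseteq> I" if J: "nilpotent_ideal scale mult J" for J
  proof -
    have "0 \<in> I" "0 \<in> J"
      using I(1) J alg_ideal_zero unfolding nilpotent_ideal_def by blast+
    then have "I \<subseteq> I + J" "J \<subseteq> I + J"
      using set_zero_plus2[of J I] set_zero_plus2[of I J] by (simp_all add: add.commute)
    moreover have IJ: "nilpotent_ideal scale mult (I + J)"
      using I(1) J by (rule nilpotent_ideal_sum)
    then have "dim (I + J) \<le> dim I"
      using I(2) \<open>finite D\<close> unfolding D_def by simp
    moreover have "subspace I" "subspace (I + J)"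
      using I(1) IJ unfolding nilpotent_ideal_def alg_ideal_def by blast+
    ultimately show ?thesis
      using subspace_dim_equal by blast
  qed
  with I(1) show ?thesis
    by blast
qed

lemma
  shows nilpotent_ideal_Rad: "nilpotent_ideal scale mult (Rad scale mult)"
    and nilpotent_ideal_subset_Rad: "nilpotent_ideal scale mult J \<Longrightarrow> J \<subseteq> Rad scale mult"
proof -
  obtain I where I: "nilpotent_ideal scale mult I" "\<And>J. nilpotent_ideal scale mult J \<Longrightarrow> J \<subseteq> I"
    using ex_greatest_nilpotent_ideal by blast
  then have "Rad scale mult = I"
    unfolding Rad_def by (rule Greatest_equality) (use I in auto)
  with I show "nilpotent_ideal scale mult (Rad scale mult)"
    and "nilpotent_ideal scale mult J \<Longrightarrow> J \<subseteq> Rad scale mult"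
    by simp_all
qed

lemma nilpotent_mem_Rad: "(mult r ^^ k) r = 0 \<Longrightarrow> r \<in> Rad scale mult"
  using nilpotent_ideal_subset_Rad[OF nilpotent_principal_ideal] mem_principal_ideal by blast

lemma nil_index_Rad:
  "1 \<le> nil_index scale mult (Rad scale mult)"
  "ideal_pow scale mult (Rad scale mult) (nil_index scale mult (Rad scale mult)) = {0}"
proof -
  have "\<exists>m. 1 \<le> m \<and> ideal_pow scale mult (Rad scale mult) m = {0}"
    using nilpotent_ideal_Rad unfolding nilpotent_ideal_def by blast
  then show "1 \<le> nil_index scale mult (Rad scale mult)"
    "ideal_pow scale mult (Rad scale mult) (nil_index scale mult (Rad scale mult)) = {0}"
    unfolding nil_index_def by (metis (mono_tags, lifting) LeastI_ex)+
qed

lemma prods_Rad_eq_zero: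
  assumes "prods mult (Rad scale mult) n x" "nil_index scale mult (Rad scale mult) \<le> n"
  shows "x = 0"
proof -
  have "alg_ideal scale mult (Rad scale mult)"
    using nilpotent_ideal_Rad unfolding nilpotent_ideal_def by blast
  then show ?thesis
    using prods_eq_zero_if_ideal_pow_eq_zero nil_index_Rad assms by blast
qed

lemma funpow_mult_Rad_eq_zero_on_Rad:
  assumes "a \<in> Rad scale mult" "v \<in> Rad scale mult" "nil_index scale mult (Rad scale mult) \<le> Suc i"
  shows "(mult a ^^ i) v = 0"
  using prods_Rad_eq_zero[OF prods_funpow_mult[OF assms(1,2)] assms(3)] .

lemma funpow_mult_Rad_eq_zero:
  assumes "a \<in> Rad scale mult" "nil_index scale mult (Rad scale mult) \<le> i"
  shows "(mult a ^^ i) y = 0"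
proof -
  have "alg_ideal scale mult (Rad scale mult)"
    using nilpotent_ideal_Rad unfolding nilpotent_ideal_def by blast
  then have "mult a y \<in> Rad scale mult"
    using assms(1) unfolding alg_ideal_def by blast
  moreover obtain i' where i: "i = Suc i'"
    using assms(2) nil_index_Rad(1) by (cases i) auto
  ultimately have "(mult a ^^ i') (mult a y) = 0"
    using funpow_mult_Rad_eq_zero_on_Rad[OF assms(1)] assms(2) by simp
  then show ?thesis
    by (simp only: i funpow_mult_Suc)
qed

end

section \<open>Rota-Baxter operators of weight zero\<close>

locale rota_baxter_algebra = fd_comm_assoc_algebra scale mult Basis
  for scale :: "'k::field_char_0 \<Rightarrow> 'v::ab_group_add \<Rightarrow> 'v" and mult Basis +
  fixes R :: "'v \<Rightarrow> 'v"
  assumes rota_baxter: "rota_baxter0 scale mult R"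
begin

lemma linear_R: "Vector_Spaces.linear scale scale R"
  using rota_baxter unfolding rota_baxter0_def by blast

sublocale R: Vector_Spaces.linear scale scale R
  by (rule linear_R)

lemma mult_R_R: "mult (R x) (R y) = R (mult (R x) y + mult x (R y))"
  using rota_baxter unfolding rota_baxter0_def by blast

text \<open>For \<open>e = R y\<close>, \<open>t = R (y e)\<close>, \<open>s = R (y t)\<close> the Rota-Baxter identity gives \<open>e = 2t = 4s\<close> and
  \<open>e t = 3s\<close>, while \<open>e = e e = 4 t t\<close> gives \<open>t t = s\<close> and \<open>e t = 2s\<close>.\<close>

lemma range_R_idempotent_eq_zero:
  assumes "e \<in> range R" "mult e e = e"
  shows "e = 0"
proof -
  obtain y where e: "e = R y"
    using assms(1) by blast
  define t s q where "t = R (mult y e)" and "s = R (mult y t)" and "q = mult t t"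
  have "e = R (mult e y + mult y e)"
    using mult_R_R[of y y] assms(2) e by simp
  also have "\<dots> = scale 2 t"
    by (simp add: t_def mult_commute[of e y] R.add scale_two)
  finally have e2t: "e = scale 2 t" .
  have "t = R (mult y e)"
    by (fact t_def)
  also have "\<dots> = scale 2 s"
    by (simp only: e2t s_def mult_scale_right R.scale)
  finally have t2s: "t = scale 2 s" .
  have "scale 2 t = scale 4 q"
    using assms(2) unfolding e2t q_def by (simp add: mult_scale_left mult_scale_right)
  then have q: "q = s"
    by (simp add: t2s)
  have "mult e (mult y e) = mult y e"
    using assms(2) mult_left_commute by metis
  then have "mult e t = R (mult y e + mult y t)"
    using mult_R_R[of y "mult y e"] unfolding e t_def by simp
  also have "\<dots> = scale 3 s"
    by (simp add: s_def e2t mult_add_right R.add scale_two scale_three)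
  finally have "scale 2 s = scale 3 s"
    using q unfolding e2t q_def by (simp add: mult_scale_left)
  then have "s = 0"
    by simp
  then show ?thesis
    by (simp add: e2t t2s)
qed

lemma range_R_nilpotent:
  assumes "r \<in> range R"
  shows "\<exists>k. (mult r ^^ k) r = 0"
proof (rule ccontr)
  assume "\<nexists>k. (mult r ^^ k) r = 0"
  moreover have "subspace (range R)"
    using subspace_UNIV by (rule R.subspace_image)
  moreover have "mult x y \<in> range R" if "x \<in> range R" "y \<in> range R" for x y
    using that mult_R_R by blast
  ultimately obtain e where "e \<in> range R" "e \<noteq> 0" "mult e e = e"
    using idempotent_if_not_nilpotent assms by metis
  then show False
    using range_R_idempotent_eq_zero by blast
qed

lemma range_R_subset_Rad: "range R \<subseteq> Rad scale mult"
  using range_R_nilpotent nilpotent_mem_Rad by blast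

lemma R_R_eq:
  assumes unit: "\<And>x. mult u x = x"
  shows "R (R x) = mult (R u) (R x) - R (mult (R u) x)"
proof -
  have "mult (R x) (R u) = R (mult (R x) u + mult x (R u))"
    by (rule mult_R_R)
  then have "mult (R u) (R x) = R (R x) + R (mult (R u) x)"
    using unit by (simp add: mult_commute R.add)
  then show ?thesis
    by (simp add: algebra_simps)
qed

lemma scale_funpow_R_eq:
  assumes unit: "\<And>x. mult u x = x"
  shows "scale (of_nat n) ((R ^^ Suc n) x) = mult (R u) ((R ^^ n) x) - (R ^^ n) (mult (R u) x)"
proof (induction n)
  case 0
  then show ?case
    by simp
next
  case (Suc n)
  let ?a = "R u" and ?y = "(R ^^ Suc n) x"
  have "scale (of_nat n) (R ?y) = R (scale (of_nat n) ?y)"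
    by (simp only: R.scale)
  also have "\<dots> = R (mult ?a ((R ^^ n) x)) - R ((R ^^ n) (mult ?a x))"
    by (simp only: Suc R.diff)
  also have "R (mult ?a ((R ^^ n) x)) = mult ?a ?y - R ?y"
    using R_R_eq[OF unit, of "(R ^^ n) x"] by simp
  finally have "scale (of_nat n) (R ?y) + R ?y = mult ?a ?y - R ((R ^^ n) (mult ?a x))"
    by (simp add: algebra_simps)
  then show ?case
    by (simp add: scale_left_distrib add.commute)
qed

text \<open>For one factor \<open>R\<close> either \<open>j \<ge> m\<close>, or \<open>i + 1 \<ge> m\<close> and \<open>R (a\<^sup>j x) \<in> Rad\<close>; each further \<open>R\<close> is
  traded by \<open>scale_funpow_R_eq\<close> for one more factor \<open>a\<close> on either side.\<close>

lemma funpow_R_between_powers_eq_zero: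
  assumes unit: "\<And>x. mult u x = x"
    and "2 * nil_index scale mult (Rad scale mult) - 1 \<le> i + j + Suc n"
  shows "(mult (R u) ^^ i) ((R ^^ Suc n) ((mult (R u) ^^ j) x)) = 0"
  using assms(2)
proof (induction n arbitrary: i j)
  case 0
  let ?m = "nil_index scale mult (Rad scale mult)" and ?a = "R u"
  have a: "?a \<in> Rad scale mult"
    using range_R_subset_Rad by blast
  show ?case
  proof (cases "?m \<le> j")
    case True
    then show ?thesis
      using funpow_mult_Rad_eq_zero[OF a] by simp
  next
    case False
    then have "?m \<le> Suc i"
      using "0" by linarith
    moreover have "R ((mult ?a ^^ j) x) \<in> Rad scale mult"
      using range_R_subset_Rad by blast
    ultimately show ?thesis
      using funpow_mult_Rad_eq_zero_on_Rad[OF a] by simp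
  qed
next
  case (Suc n)
  let ?a = "R u"
  let ?y = "(mult ?a ^^ j) x"
  have "scale (of_nat (Suc n)) ((mult ?a ^^ i) ((R ^^ Suc (Suc n)) ?y))
      = (mult ?a ^^ i) (mult ?a ((R ^^ Suc n) ?y) - (R ^^ Suc n) (mult ?a ?y))"
    by (simp only: funpow_mult_scale[symmetric] scale_funpow_R_eq[OF unit])
  also have "\<dots> = (mult ?a ^^ Suc i) ((R ^^ Suc n) ?y)
        - (mult ?a ^^ i) ((R ^^ Suc n) ((mult ?a ^^ Suc j) x))"
    by (simp only: funpow_mult_diff funpow.simps(2) o_apply funpow_swap1)
  also have "\<dots> = 0"
    using Suc.IH[of "Suc i" j] Suc.IH[of i "Suc j"] Suc.prems by simp
  finally show ?case
    by (simp del: of_nat_Suc)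
qed

lemma funpow_R_eq_zero_if_unital:
  assumes "\<And>x. mult u x = x"
  shows "R ^^ (2 * nil_index scale mult (Rad scale mult) - 1) = (\<lambda>_. 0)"
proof
  fix x
  define n where "n = 2 * nil_index scale mult (Rad scale mult) - 2"
  have n: "2 * nil_index scale mult (Rad scale mult) - 1 = Suc n"
    using nil_index_Rad(1) unfolding n_def by simp
  show "(R ^^ (2 * nil_index scale mult (Rad scale mult) - 1)) x = 0"
    using funpow_R_between_powers_eq_zero[OF assms, of 0 0 n x] unfolding n by simp
qed

end

lemma bilinear_algebra_if_algebra:
  assumes "algebra scale mult"
  shows "bilinear_algebra scale mult"
proof -
  interpret vector_space scale
    using assms unfolding algebra_def by blast
  show ?thesis
    by unfold_locales (use assms in \<open>auto simp: algebra_def bilinear_mult_def\<close>)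
qed

lemma finite_dim_algebra_has_basis:
  assumes "finite_dim_algebra scale mult"
  obtains Basis where "finite_dimensional_vector_space scale Basis"
proof -
  interpret vector_space scale
    using assms unfolding finite_dim_algebra_def algebra_def by blast
  obtain B0 where "finite B0" "span B0 = UNIV"
    using assms unfolding finite_dim_algebra_def by blast
  moreover obtain B where "independent B" "UNIV \<subseteq> span B"
    using basis_exists[of UNIV] by blast
  ultimately have "finite B"
    using independent_span_bound by blast
  then have "finite_dimensional_vector_space scale B"
    by unfold_locales (use \<open>independent B\<close> \<open>UNIV \<subseteq> span B\<close> in auto)
  then show ?thesis
    by (rule that)
qed

lemma rota_baxter_algebraI:
  fixes scale :: "'k::field_char_0 \<Rightarrow> 'v::ab_group_add \<Rightarrow> 'v"
  assumes "finite_dimensional_vector_space scale Basis" "bilinear_algebra scale mult"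
    and "commutative_mult mult" "associative_mult mult" "rota_baxter0 scale mult R"
  shows "rota_baxter_algebra scale mult Basis R"
proof -
  interpret bilinear_algebra scale mult by fact
  interpret finite_dimensional_vector_space scale Basis by fact
  show ?thesis
    by unfold_locales
      (use assms(3-5) in \<open>auto simp: commutative_mult_def associative_mult_def\<close>)
qed

lemma rb_index_le:
  assumes "\<And>R. rota_baxter0 scale mult R \<Longrightarrow> R ^^ n = (\<lambda>_. 0)"
  shows "rb_index scale mult \<le> enat n"
  using assms unfolding rb_index_def by (auto intro: Least_le)

theorem theorem13:
  fixes scale :: "'k::field_char_0 \<Rightarrow> 'v::ab_group_add \<Rightarrow> 'v"
    and mult :: "'v \<Rightarrow> 'v \<Rightarrow> 'v"
    and R :: "'v \<Rightarrow> 'v"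
  assumes "finite_dim_algebra scale mult"
    and "commutative_mult mult"
    and "associative_mult mult \<or> alternative_mult mult"
    and "rota_baxter0 scale mult R"
  shows "range R \<subseteq> Rad scale mult \<and>
         (unital_mult mult \<longrightarrow>
           rb_index scale mult \<le> enat (2 * nil_index scale mult (Rad scale mult) - 1))"
proof -
  obtain Basis where basis: "finite_dimensional_vector_space scale Basis"
    using assms(1) by (rule finite_dim_algebra_has_basis)
  have bilinear: "bilinear_algebra scale mult"
    using assms(1) unfolding finite_dim_algebra_def by (blast intro: bilinear_algebra_if_algebra)
  have "associative_mult mult"
    using assms(3) associative_if_commutative_alternative[OF bilinear assms(2)] by blast
  note rb_algebra = rota_baxter_algebraI[OF basis bilinear assms(2) this]
  interpret rota_baxter_algebra scale mult Basis R
    using rb_algebra assms(4) .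
  have "rb_index scale mult \<le> enat (2 * nil_index scale mult (Rad scale mult) - 1)"
    if unital: "unital_mult mult"
  proof -
    obtain u where "\<And>x. mult u x = x"
      using unital unfolding unital_mult_def by blast
    then show ?thesis
      using rota_baxter_algebra.funpow_R_eq_zero_if_unital[OF rb_algebra]
      by (blast intro: rb_index_le)
  qed
  with range_R_subset_Rad show ?thesis
    by blast
qed

end
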